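(* Let $r:E\to\mathbb R$ be continuous, bounded and non-negative, $\alpha_t=\int_0^t r(X_u)du$, and assume $\mu(f)<0$ and (L$_r$): for any $\delta,\varepsilon>0$ and compact $K\subset E$ there are $N>0$, $p>0$ such that for all $n\ge N$ and $x\in K$, $$\mathbb P^x\Big\{\Big|\frac{1}{\int_0^{n\delta}e^{-\alpha_s}ds}\int_0^{n\delta}e^{-\alpha_s}f(X_s)ds-\mu(f)\Big|>\varepsilon\Big\}\le e^{-pn\delta}.$$ Then for every $x$ there is $d(x)<0$ with $\gamma_r(x)=\sup_\tau\limsup_{T\to\infty}\mathbb E^x\{\int_0^{\tau\wedge T}e^{-\alpha_s}(f(X_s)-d(x))ds\}<\infty$, and $d$ can be chosen so that $M(x)=\frac{\gamma_r(x)+2\|g\|+1}{-d(x)}$ is bounded on compact subsets of $E$.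
   Context: $E$ is a locally compact separable metric space in which every closed ball is compact. $(X_t)$ is a right-continuous time-homogeneous (standard) Markov process on $E$ with laws $\mathbb P^x$, expectations $\mathbb E^x$, satisfying the weak Feller property and ergodicity (a unique probability measure $\mu$ with $\|P_t(x,\cdot)-\mu\|_{TV}\to0$ for all $x$); $\mu(f)=\int f\,d\mu$. $f,g$ are continuous and bounded, $\|\cdot\|$ the sup norm. Stopping times may be infinite. *)

theory Defs
  imports "HOL-Probability.Probability"
begin

text \<open>Time is real, only t >= 0 is relevant. The process lives on a
measurable space Omega with a filtration F (real-indexed), a family of laws P x
(one probability measure per starting point x, all on the sigma-algebra of Omega),
and paths X t omega with values in the state space 'e (with its Borel sigma-algebra).\<close>

definition filtration_on :: "'o measure \<Rightarrow> (real \<Rightarrow> 'o measure) \<Rightarrow> bool" where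
  "filtration_on \<Omega> F \<longleftrightarrow>
     (\<forall>t\<ge>0. space (F t) = space \<Omega> \<and> sets (F t) \<subseteq> sets \<Omega>) \<and>
     (\<forall>s t. 0 \<le> s \<and> s \<le> t \<longrightarrow> sets (F s) \<subseteq> sets (F t))"

definition stopping_time_inf :: "'o measure \<Rightarrow> (real \<Rightarrow> 'o measure) \<Rightarrow> ('o \<Rightarrow> ennreal) \<Rightarrow> bool" where
  "stopping_time_inf \<Omega> F \<tau> \<longleftrightarrow>
     (\<forall>t\<ge>0. {\<omega> \<in> space \<Omega>. \<tau> \<omega> \<le> ennreal t} \<in> sets (F t))"

definition pre_tau_sets :: "'o measure \<Rightarrow> (real \<Rightarrow> 'o measure) \<Rightarrow> ('o \<Rightarrow> ennreal) \<Rightarrow> 'o set set" where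
  "pre_tau_sets \<Omega> F \<tau> =
     {B \<in> sets \<Omega>. \<forall>t\<ge>0. B \<inter> {\<omega> \<in> space \<Omega>. \<tau> \<omega> \<le> ennreal t} \<in> sets (F t)}"

definition trans_op :: "('e \<Rightarrow> 'o measure) \<Rightarrow> (real \<Rightarrow> 'o \<Rightarrow> 'e) \<Rightarrow> real \<Rightarrow> ('e \<Rightarrow> real) \<Rightarrow> 'e \<Rightarrow> real" where
  "trans_op P X s h y = (\<integral>\<omega>. h (X s \<omega>) \<partial>P y)"

definition trans_prob :: "('e \<Rightarrow> 'o measure) \<Rightarrow> (real \<Rightarrow> 'o \<Rightarrow> 'e) \<Rightarrow> real \<Rightarrow> 'e \<Rightarrow> 'e set \<Rightarrow> real" where
  "trans_prob P X t x A = measure (P x) {\<omega> \<in> space (P x). X t \<omega> \<in> A}"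

text \<open>Right-continuous (with left limits), time-homogeneous, strong Markov,
quasi-left-continuous (i.e. standard) Markov process with respect to the filtration F.\<close>
definition standard_markov ::
  "'o measure \<Rightarrow> (real \<Rightarrow> 'o measure) \<Rightarrow> ('e::topological_space \<Rightarrow> 'o measure) \<Rightarrow> (real \<Rightarrow> 'o \<Rightarrow> 'e) \<Rightarrow> bool" where
  "standard_markov \<Omega> F P X \<longleftrightarrow>
     filtration_on \<Omega> F \<and>
     (\<forall>x. prob_space (P x) \<and> sets (P x) = sets \<Omega>) \<and>
     (\<forall>t\<ge>0. X t \<in> measurable (F t) borel) \<and>
     (\<forall>x. AE \<omega> in P x. X 0 \<omega> = x) \<and>
     (\<forall>\<omega>\<in>space \<Omega>. \<forall>t\<ge>0. continuous (at_right t) (\<lambda>s. X s \<omega>)) \<and>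
     (\<forall>\<omega>\<in>space \<Omega>. \<forall>t>0. \<exists>l. ((\<lambda>s. X s \<omega>) \<longlongrightarrow> l) (at_left t)) \<and>
     (\<forall>t\<ge>0. \<forall>A\<in>sets borel. (\<lambda>x. trans_prob P X t x A) \<in> borel_measurable borel) \<and>
     (\<forall>x \<tau> B s h. stopping_time_inf \<Omega> F \<tau> \<and> B \<in> pre_tau_sets \<Omega> F \<tau> \<and> s \<ge> 0 \<and>
         h \<in> borel_measurable borel \<and> bounded (range h) \<longrightarrow>
        (\<integral>\<omega>. indicator (B \<inter> {\<omega>. \<tau> \<omega> < \<infinity>}) \<omega> * h (X (enn2real (\<tau> \<omega>) + s) \<omega>) \<partial>P x) =
        (\<integral>\<omega>. indicator (B \<inter> {\<omega>. \<tau> \<omega> < \<infinity>}) \<omega> * trans_op P X s h (X (enn2real (\<tau> \<omega>)) \<omega>) \<partial>P x)) \<and>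
     (\<forall>x \<sigma> \<tau>. (\<forall>n. stopping_time_inf \<Omega> F (\<sigma> n)) \<and> stopping_time_inf \<Omega> F \<tau> \<and>
         (\<forall>\<omega>\<in>space \<Omega>. incseq (\<lambda>n. \<sigma> n \<omega>) \<and> (\<lambda>n. \<sigma> n \<omega>) \<longlonglongrightarrow> \<tau> \<omega>) \<longrightarrow>
        (AE \<omega> in P x. \<tau> \<omega> < \<infinity> \<longrightarrow>
            (\<lambda>n. X (enn2real (\<sigma> n \<omega>)) \<omega>) \<longlonglongrightarrow> X (enn2real (\<tau> \<omega>)) \<omega>))"

definition weak_feller :: "('e::topological_space \<Rightarrow> 'o measure) \<Rightarrow> (real \<Rightarrow> 'o \<Rightarrow> 'e) \<Rightarrow> bool" where
  "weak_feller P X \<longleftrightarrow>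
     (\<forall>h t. continuous_on UNIV h \<and> bounded (range (h :: 'e \<Rightarrow> real)) \<and> t \<ge> 0 \<longrightarrow>
        continuous_on UNIV (trans_op P X t h))"

definition tv_dist :: "('e::topological_space \<Rightarrow> 'o measure) \<Rightarrow> (real \<Rightarrow> 'o \<Rightarrow> 'e) \<Rightarrow> real \<Rightarrow> 'e \<Rightarrow> 'e measure \<Rightarrow> real" where
  "tv_dist P X t x \<mu> = (SUP A\<in>sets borel. \<bar>trans_prob P X t x A - measure \<mu> A\<bar>)"

definition ergodic :: "('e::topological_space \<Rightarrow> 'o measure) \<Rightarrow> (real \<Rightarrow> 'o \<Rightarrow> 'e) \<Rightarrow> 'e measure \<Rightarrow> bool" where
  "ergodic P X \<mu> \<longleftrightarrow> prob_space \<mu> \<and> sets \<mu> = sets borel \<and>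
     (\<forall>x. ((\<lambda>t. tv_dist P X t x \<mu>) \<longlongrightarrow> 0) at_top)"

definition alpha :: "('e \<Rightarrow> real) \<Rightarrow> (real \<Rightarrow> 'o \<Rightarrow> 'e) \<Rightarrow> 'o \<Rightarrow> real \<Rightarrow> real" where
  "alpha r X \<omega> t = (LINT u:{0..t}|lborel. r (X u \<omega>))"

definition gamma_r ::
  "'o measure \<Rightarrow> (real \<Rightarrow> 'o measure) \<Rightarrow> ('e \<Rightarrow> 'o measure) \<Rightarrow> (real \<Rightarrow> 'o \<Rightarrow> 'e) \<Rightarrow>
   ('e \<Rightarrow> real) \<Rightarrow> ('e \<Rightarrow> real) \<Rightarrow> real \<Rightarrow> 'e \<Rightarrow> ereal" where
  "gamma_r \<Omega> F P X r f c x =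
     (SUP \<tau>\<in>{\<tau>. stopping_time_inf \<Omega> F \<tau>}.
        Limsup at_top (\<lambda>T::real. ereal (\<integral>\<omega>.
           (LINT s:{0..enn2real (min (\<tau> \<omega>) (ennreal T))}|lborel.
               exp (- alpha r X \<omega> s) * (f (X s \<omega>) - c)) \<partial>P x)))"

definition supnorm :: "('e \<Rightarrow> real) \<Rightarrow> real" where
  "supnorm g = (SUP y. \<bar>g y\<bar>)"

end

theory Submission
  imports Defs
begin

text \<open>
  Take d = \<mu>(f)/2 and C = sup |f| + |d|. If the discounted average of f over [0, n] lies within
  -\<mu>(f)/2 of \<mu>(f), it is at most d, so the integral of e^{-\<alpha>} (f - d) over [0, n] is
  nonpositive and the integral up to any t in [n, n + 1) is at most C; otherwise it is at most
  C (n + 1). Pathwise, the payoff up to \<tau> \<and> T is therefore at most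
  C (N + 1) + C \<Sum>{N \<le> n \<le> T} (n + 1) 1{deviation at time n}, and (L_r) with \<delta> = 1 bounds its
  expectation, uniformly in \<tau>, T and x \<in> K, by the convergent series
  C (N + 1) + C \<Sum>n (n + 1) e^{-pn}. Stopping at time 0 shows \<gamma>_r \<ge> 0.
\<close>

text \<open>
  The process is only meaningful at times t \<ge> 0; precomposing with max 0 turns it into a
  jointly measurable function on all of \<Omega> \<times> \<real>.
\<close>

lemma measurable_right_continuous_process:
  fixes X :: "real \<Rightarrow> 'o \<Rightarrow> 'e::metric_space"
  assumes meas: "\<And>t. t \<ge> 0 \<Longrightarrow> X t \<in> borel_measurable M"
    and right_cont: "\<And>\<omega> t. \<omega> \<in> space M \<Longrightarrow> t \<ge> 0 \<Longrightarrow>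
      continuous (at_right t) (\<lambda>s. X s \<omega>)"
  shows "(\<lambda>z. X (max 0 (snd z)) (fst z)) \<in> borel_measurable (M \<Otimes>\<^sub>M lborel)"
proof -
  \<comment> \<open>dyadic approximation strictly from the right, where right-continuity applies\<close>
  define q :: "nat \<Rightarrow> real \<Rightarrow> real"
    where "q n s = (of_int \<lfloor>2 ^ n * max 0 s\<rfloor> + 1) / 2 ^ n" for n s
  show ?thesis
  proof (rule borel_measurable_LIMSEQ_metric[where f="\<lambda>n (\<omega>, s). X (q n s) \<omega>"])
    fix n :: nat
    have "(\<lambda>z. X (max 0 ((of_int \<lfloor>(2::real) ^ n * max 0 (snd z)\<rfloor> + 1) / 2 ^ n)) (fst z))
        \<in> borel_measurable (M \<Otimes>\<^sub>M lborel)"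
      by (rule measurable_compose_countable
          [where f="\<lambda>i z. X (max 0 ((of_int i + 1) / 2 ^ n)) (fst z)"
            and g="\<lambda>z. \<lfloor>(2::real) ^ n * max 0 (snd z)\<rfloor>"])
        (simp_all add: meas measurable_compose[OF measurable_fst])
    moreover have "max 0 (q n s) = q n s" for s
      unfolding q_def by simp
    ultimately show "(\<lambda>(\<omega>, s). X (q n s) \<omega>) \<in> borel_measurable (M \<Otimes>\<^sub>M lborel)"
      by (simp add: q_def case_prod_beta')
  next
    fix z :: "'o \<times> real" assume "z \<in> space (M \<Otimes>\<^sub>M lborel)"
    then obtain \<omega> s where z: "z = (\<omega>, s)" and \<omega>: "\<omega> \<in> space M"
      by (auto simp: space_pair_measure)
    define t where "t = max 0 s"
    have q: "q n s = (of_int \<lfloor>2 ^ n * t\<rfloor> + 1) / 2 ^ n" for n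
      unfolding q_def t_def ..
    have above: "t < q n s" for n
    proof -
      have "t * 2 ^ n < of_int \<lfloor>2 ^ n * t\<rfloor> + 1"
        by (simp add: mult.commute[of t])
      then show ?thesis unfolding q by (simp add: pos_less_divide_eq)
    qed
    have close: "q n s \<le> t + 1 / 2 ^ n" for n
    proof -
      have "of_int \<lfloor>2 ^ n * t\<rfloor> + 1 \<le> (t + 1 / 2 ^ n) * 2 ^ n"
        using floor_le_iff[of "2 ^ n * t"] by (simp add: distrib_right mult.commute[of t])
      then show ?thesis unfolding q by (simp add: pos_divide_le_eq)
    qed
    have lim: "(\<lambda>n. t + 1 / 2 ^ n) \<longlonglongrightarrow> t"
      using tendsto_add[OF tendsto_const[of t] LIMSEQ_divide_realpow_zero[of 2 1]] by simp
    have "(\<lambda>n. q n s) \<longlonglongrightarrow> t"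
      by (rule real_tendsto_sandwich[OF _ _ tendsto_const lim])
        (use above close in \<open>auto intro: always_eventually less_imp_le\<close>)
    then have "filterlim (\<lambda>n. q n s) (at_right t) sequentially"
      using above by (auto simp: filterlim_at intro!: always_eventually)
    moreover have "((\<lambda>s. X s \<omega>) \<longlongrightarrow> X t \<omega>) (at_right t)"
      using right_cont[OF \<omega>, of t] by (simp add: t_def continuous_within)
    ultimately show "(\<lambda>n. (\<lambda>(\<omega>, s). X (q n s) \<omega>) z) \<longlonglongrightarrow> X (max 0 (snd z)) (fst z)"
      unfolding z t_def by (simp only: case_prod_conv fst_conv snd_conv) (rule filterlim_compose)
  qed
qed

lemma standard_markov_measurable_paths:
  fixes X :: "real \<Rightarrow> 'o \<Rightarrow> 'e::metric_space"
  assumes "standard_markov \<Omega> F P X"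
  shows "(\<lambda>z. X (max 0 (snd z)) (fst z)) \<in> borel_measurable (\<Omega> \<Otimes>\<^sub>M lborel)"
proof (rule measurable_right_continuous_process)
  have filtration: "filtration_on \<Omega> F"
    and adapted: "\<And>t. 0 \<le> t \<Longrightarrow> X t \<in> measurable (F t) borel"
    using assms unfolding standard_markov_def by auto
  show "X t \<in> borel_measurable \<Omega>" if "0 \<le> t" for t
    using filtration that
    by (intro measurable_from_subalg[OF _ adapted[OF that]])
      (auto simp: subalgebra_def filtration_on_def)
  show "continuous (at_right t) (\<lambda>s. X s \<omega>)" if "\<omega> \<in> space \<Omega>" "0 \<le> t" for \<omega> t
    using assms that unfolding standard_markov_def by auto
qed

lemma borel_measurable_LINT_upto:
  fixes H :: "'o \<times> real \<Rightarrow> real"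
  assumes [measurable]: "H \<in> borel_measurable (M \<Otimes>\<^sub>M lborel)"
  shows "(\<lambda>z. LINT s:{0..snd z}|lborel. H (fst z, s)) \<in> borel_measurable (M \<Otimes>\<^sub>M lborel)"
proof -
  have "(\<lambda>x. (fst (fst x), snd x)) \<in> (M \<Otimes>\<^sub>M lborel) \<Otimes>\<^sub>M lborel \<rightarrow>\<^sub>M M \<Otimes>\<^sub>M lborel"
    by measurable
  from measurable_compose[OF this assms]
  have "(\<lambda>x. indicator {0..snd (fst x)} (snd x) *\<^sub>R H (fst (fst x), snd x))
      \<in> borel_measurable ((M \<Otimes>\<^sub>M lborel) \<Otimes>\<^sub>M lborel)"
    unfolding indicator_def atLeastAtMost_iff by measurable
  then have "(\<lambda>x. \<integral>s. indicator {0..snd x} s *\<^sub>R H (fst x, s) \<partial>lborel)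
      \<in> borel_measurable (M \<Otimes>\<^sub>M lborel)"
    by (intro lborel.borel_measurable_lebesgue_integral) (simp add: split_beta')
  then show ?thesis
    by (simp add: set_lebesgue_integral_def)
qed

definition discounted_mean ::
    "('e \<Rightarrow> real) \<Rightarrow> (real \<Rightarrow> 'o \<Rightarrow> 'e) \<Rightarrow> ('e \<Rightarrow> real) \<Rightarrow> 'o \<Rightarrow> real \<Rightarrow> real"
  where "discounted_mean r X f \<omega> t =
    (1 / (LINT s:{0..t}|lborel. exp (- alpha r X \<omega> s))) *
    (LINT s:{0..t}|lborel. exp (- alpha r X \<omega> s) * f (X s \<omega>))"

lemma alpha_eq_LINT_max0:
  "alpha r X \<omega> t = (LINT u:{0..t}|lborel. r (X (max 0 u) \<omega>))"
  unfolding alpha_def by (rule set_lebesgue_integral_cong) auto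

context
  fixes X :: "real \<Rightarrow> 'o \<Rightarrow> 'e::topological_space" and M :: "'o measure"
    and r :: "'e \<Rightarrow> real"
  assumes X[measurable]:
      "(\<lambda>z. X (max 0 (snd z)) (fst z)) \<in> borel_measurable (M \<Otimes>\<^sub>M lborel)"
    and r[measurable]: "r \<in> borel_measurable borel"
begin

lemma borel_measurable_alpha [measurable]:
  "(\<lambda>z. alpha r X (fst z) (snd z)) \<in> borel_measurable (M \<Otimes>\<^sub>M lborel)"
  unfolding alpha_eq_LINT_max0
  using borel_measurable_LINT_upto[where H="\<lambda>z. r (X (max 0 (snd z)) (fst z))"] by simp

lemma borel_measurable_discounted_mean:
  assumes [measurable]: "f \<in> borel_measurable borel"
  shows "(\<lambda>\<omega>. discounted_mean r X f \<omega> t) \<in> borel_measurable M"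
proof -
  have A: "(\<lambda>z. LINT s:{0..snd z}|lborel. exp (- alpha r X (fst z) s))
      \<in> borel_measurable (M \<Otimes>\<^sub>M lborel)"
    and B: "(\<lambda>z. LINT s:{0..snd z}|lborel. exp (- alpha r X (fst z) s) * f (X (max 0 s) (fst z)))
      \<in> borel_measurable (M \<Otimes>\<^sub>M lborel)"
    by (intro
        borel_measurable_LINT_upto[where H="\<lambda>z. exp (- alpha r X (fst z) (snd z))", simplified]
        borel_measurable_LINT_upto[where
          H="\<lambda>z. exp (- alpha r X (fst z) (snd z)) * f (X (max 0 (snd z)) (fst z))", simplified];
        measurable)+
  have Pt: "(\<lambda>\<omega>. (\<omega>, t)) \<in> M \<rightarrow>\<^sub>M M \<Otimes>\<^sub>M lborel"
    by measurable
  have [measurable]: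
    "(\<lambda>\<omega>. LINT s:{0..t}|lborel. exp (- alpha r X \<omega> s)) \<in> borel_measurable M"
    "(\<lambda>\<omega>. LINT s:{0..t}|lborel. exp (- alpha r X \<omega> s) * f (X (max 0 s) \<omega>))
      \<in> borel_measurable M"
    using measurable_compose[OF Pt A] measurable_compose[OF Pt B] by simp_all
  have "discounted_mean r X f \<omega> t =
      (1 / (LINT s:{0..t}|lborel. exp (- alpha r X \<omega> s))) *
      (LINT s:{0..t}|lborel. exp (- alpha r X \<omega> s) * f (X (max 0 s) \<omega>))" for \<omega>
    unfolding discounted_mean_def by (simp add: set_lebesgue_integral_cong)
  then show ?thesis
    by (simp only:) measurable
qed

end

lemma set_integrable_bounded:
  fixes h :: "real \<Rightarrow> real"
  assumes "h \<in> borel_measurable lborel" "\<And>s. \<bar>h s\<bar> \<le> C"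
    and "A \<in> sets lborel" "emeasure lborel A < \<infinity>"
  shows "set_integrable lborel A h"
  unfolding set_integrable_def
  by (rule integrableI_bounded_set_indicator[where B=C]) (use assms in auto)

lemma set_integral_le_const_measure:
  fixes h :: "real \<Rightarrow> real"
  assumes "h \<in> borel_measurable lborel" "\<And>s. \<bar>h s\<bar> \<le> C"
    and "A \<in> sets lborel" "emeasure lborel A < \<infinity>"
  shows "(LINT s:A|lborel. h s) \<le> C * measure lborel A"
proof -
  have "(LINT s:A|lborel. h s) \<le> (LINT s:A|lborel. C)"
    using assms
    by (intro set_integral_mono set_integrable_bounded[where C="\<bar>C\<bar>"])
      (auto intro: order_trans[OF _ abs_ge_self] dest: abs_le_D1)
  also have "\<dots> = C * measure lborel A"
    using assms by (simp add: set_integral_const)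
  finally show ?thesis .
qed

lemma set_integral_weighted_le_zero:
  fixes e \<phi> :: "real \<Rightarrow> real"
  assumes [measurable]: "e \<in> borel_measurable lborel" "\<phi> \<in> borel_measurable lborel"
    and e: "\<And>s. 0 \<le> e s \<and> e s \<le> 1" and \<phi>: "\<And>s. \<bar>\<phi> s\<bar> \<le> C"
    and A: "A \<in> sets lborel" "emeasure lborel A < \<infinity>"
    and c: "c < 0"
    and mean: "(1 / (LINT s:A|lborel. e s)) * (LINT s:A|lborel. e s * \<phi> s) \<le> c"
  shows "(LINT s:A|lborel. e s * (\<phi> s - c)) \<le> 0"
proof -
  have int_e: "set_integrable lborel A e"
    by (rule set_integrable_bounded[where C=1]) (use e A in auto)
  have int_e\<phi>: "set_integrable lborel A (\<lambda>s. e s * \<phi> s)"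
  proof (rule set_integrable_bounded[where C=C])
    show "\<bar>e s * \<phi> s\<bar> \<le> C" for s
      using e[of s] \<phi>[of s] mult_left_le_one_le[of "\<bar>\<phi> s\<bar>" "e s"]
      by (simp add: abs_mult)
  qed (use A in \<open>auto simp: measurable\<close>)
  define I where "I = (LINT s:A|lborel. e s)"
  define J where "J = (LINT s:A|lborel. e s * \<phi> s)"
  have "(LINT s:A|lborel. e s * (\<phi> s - c)) = (LINT s:A|lborel. e s * \<phi> s - c * e s)"
    by (simp add: algebra_simps)
  also have "\<dots> = J - c * I"
    unfolding I_def J_def using int_e int_e\<phi> by (subst set_integral_diff(2)) auto
  also have "\<dots> \<le> 0"
  proof -
    have "I \<ge> 0"
      unfolding I_def set_lebesgue_integral_def using e
      by (intro integral_nonneg_AE) (simp add: indicator_def)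
    \<comment> \<open>a vanishing total weight gives the junk mean 0 (as 1/0 = 0), excluded by c < 0\<close>
    moreover have "I \<noteq> 0"
      using mean c unfolding I_def[symmetric] by auto
    ultimately show ?thesis
      using mean unfolding I_def[symmetric] J_def[symmetric] by (simp add: pos_divide_le_eq)
  qed
  finally show ?thesis .
qed

lemma set_integral_weighted_le_bound_of_mean_le:
  fixes e \<phi> :: "real \<Rightarrow> real"
  assumes [measurable]: "e \<in> borel_measurable lborel" "\<phi> \<in> borel_measurable lborel"
    and e: "\<And>s. 0 \<le> e s \<and> e s \<le> 1" and \<phi>: "\<And>s. \<bar>\<phi> s - c\<bar> \<le> C"
    and c: "c < 0"
    and mean: "(1 / (LINT s:{0..a}|lborel. e s)) * (LINT s:{0..a}|lborel. e s * \<phi> s) \<le> c"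
    and t: "0 \<le> a" "a \<le> t" "t \<le> a + 1"
  shows "(LINT s:{0..t}|lborel. e s * (\<phi> s - c)) \<le> C"
proof -
  define h where "h s = e s * (\<phi> s - c)" for s
  have [measurable]: "h \<in> borel_measurable lborel"
    unfolding h_def by measurable
  have h: "\<bar>h s\<bar> \<le> C" for s
    using e[of s] \<phi>[of s] mult_left_le_one_le[of "\<bar>\<phi> s - c\<bar>" "e s"]
    by (simp add: h_def abs_mult)
  have "{0..t} = {0..a} \<union> {a<..t}"
    using t by auto
  then have "(LINT s:{0..t}|lborel. h s) = (LINT s:{0..a} \<union> {a<..t}|lborel. h s)"
    by simp
  also have "\<dots> = (LINT s:{0..a}|lborel. h s) + (LINT s:{a<..t}|lborel. h s)"
    by (rule set_integral_Un) (auto intro!: set_integrable_bounded[OF _ h] simp: t(1,2))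
  also have "\<dots> \<le> 0 + C * (t - a)"
  proof (rule add_mono)
    show "(LINT s:{0..a}|lborel. h s) \<le> 0"
    proof (unfold h_def, rule set_integral_weighted_le_zero[OF _ _ e, where C="C + \<bar>c\<bar>"])
      show "\<bar>\<phi> s\<bar> \<le> C + \<bar>c\<bar>" for s
        using \<phi>[of s] abs_triangle_ineq[of "\<phi> s - c" c] by simp
    qed (use c mean t in auto)
    show "(LINT s:{a<..t}|lborel. h s) \<le> C * (t - a)"
      using set_integral_le_const_measure[of h C "{a<..t}"] h t by simp
  qed
  also have "\<dots> \<le> C"
    using t h[of 0] by (simp add: mult_left_le)
  finally show ?thesis
    unfolding h_def .
qed

lemma set_integral_weighted_le_deviations:
  fixes e \<phi> :: "real \<Rightarrow> real" and bad :: "nat \<Rightarrow> bool"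
  assumes [measurable]: "e \<in> borel_measurable lborel" "\<phi> \<in> borel_measurable lborel"
    and e: "\<And>s. 0 \<le> e s \<and> e s \<le> 1" and \<phi>: "\<And>s. \<bar>\<phi> s - c\<bar> \<le> C"
    and c: "c < 0"
    and good: "\<And>n. \<not> bad n \<Longrightarrow>
      (1 / (LINT s:{0..real n}|lborel. e s)) * (LINT s:{0..real n}|lborel. e s * \<phi> s) \<le> c"
    and t: "0 \<le> t" "nat \<lfloor>t\<rfloor> \<le> m"
  shows "(LINT s:{0..t}|lborel. e s * (\<phi> s - c))
    \<le> C * (real N + 1) + C * (\<Sum>n\<in>{N..m}. (real n + 1) * of_bool (bad n))"
proof -
  define h where "h s = e s * (\<phi> s - c)" for s
  have [measurable]: "h \<in> borel_measurable lborel"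
    unfolding h_def by measurable
  have h: "\<bar>h s\<bar> \<le> C" for s
    using e[of s] \<phi>[of s] mult_left_le_one_le[of "\<bar>\<phi> s - c\<bar>" "e s"]
    by (simp add: h_def abs_mult)
  then have "0 \<le> C"
    by (meson abs_ge_zero order_trans)
  define k where "k = nat \<lfloor>t\<rfloor>"
  have k: "real k \<le> t" "t < real k + 1" "k \<le> m"
    using t unfolding k_def by linarith+
  define S where "S = (\<Sum>n\<in>{N..m}. (real n + 1) * of_bool (bad n))"
  have up_to_t: "(LINT s:{0..t}|lborel. h s) \<le> C * t"
    using set_integral_le_const_measure[of h C "{0..t}"] h t by simp
  consider "k < N" | "N \<le> k" "bad k" | "\<not> bad k"
    by linarith
  then have "(LINT s:{0..t}|lborel. h s) \<le> C * (real N + 1) \<or> (LINT s:{0..t}|lborel. h s) \<le> C * S"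
  proof cases
    case 1
    have "C * t \<le> C * (real N + 1)"
      using k 1 \<open>0 \<le> C\<close> by (intro mult_left_mono) auto
    with up_to_t show ?thesis
      by simp
  next
    case 2
    have "real k + 1 \<le> S"
      unfolding S_def using member_le_sum[of k "{N..m}" "\<lambda>n. (real n + 1) * of_bool (bad n)"] 2 k
      by simp
    with k have "C * t \<le> C * S"
      using \<open>0 \<le> C\<close> by (intro mult_left_mono) auto
    with up_to_t show ?thesis
      by simp
  next
    case 3
    have "(LINT s:{0..t}|lborel. h s) \<le> C"
      unfolding h_def using k c good[OF 3]
      by (intro set_integral_weighted_le_bound_of_mean_le[OF _ _ e \<phi>]) auto
    also have "C \<le> C * (real N + 1)"
      using mult_left_mono[of 1 "real N + 1" C] \<open>0 \<le> C\<close> by simp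
    finally show ?thesis
      by simp
  qed
  moreover have "0 \<le> C * (real N + 1)" "0 \<le> C * S"
    using \<open>0 \<le> C\<close> unfolding S_def by (simp_all add: sum_nonneg)
  ultimately show ?thesis
    unfolding h_def S_def[symmetric] by linarith
qed

lemma summable_linear_times_exp:
  fixes p :: real
  assumes "0 < p"
  shows "summable (\<lambda>n. (real n + 1) * exp (- p * real n))"
proof (rule summable_comparison_test')
  show "summable (\<lambda>n. (2 / p + 1) * exp (- (p / 2)) ^ n)"
    using assms by (intro summable_mult summable_geometric) simp
next
  fix n :: nat
  have "p / 2 * real n \<le> exp (p / 2 * real n)"
    using exp_ge_add_one_self[of "p / 2 * real n"] by linarith
  then have "real n \<le> 2 / p * exp (p / 2 * real n)"
    using assms by (simp add: field_simps)
  moreover have "1 \<le> exp (p / 2 * real n)"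
    using assms by simp
  moreover have "(2 / p + 1) * exp (p / 2 * real n) = 2 / p * exp (p / 2 * real n) + exp (p / 2 * real n)"
    by (simp add: distrib_right)
  ultimately have "real n + 1 \<le> (2 / p + 1) * exp (p / 2 * real n)"
    by linarith
  then have "(real n + 1) * exp (- p * real n)
      \<le> (2 / p + 1) * exp (p / 2 * real n) * exp (- p * real n)"
    by (intro mult_right_mono) auto
  also have "\<dots> = (2 / p + 1) * exp (- (p / 2)) ^ n"
    by (simp add: exp_add[symmetric] exp_of_nat_mult[symmetric] mult.commute)
  finally show "norm ((real n + 1) * exp (- p * real n)) \<le> (2 / p + 1) * exp (- (p / 2)) ^ n"
    by simp
qed

lemma (in prob_space) expectation_le_deviation_sum:
  fixes Z :: "'a \<Rightarrow> real" and B :: "nat \<Rightarrow> 'a set"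
  assumes Z: "\<And>\<omega>. \<omega> \<in> space M \<Longrightarrow>
      Z \<omega> \<le> a + b * (\<Sum>n\<in>{N..m}. (real n + 1) * indicator (B n) \<omega>)"
    and B: "\<And>n. B n \<in> events"
    and prob_B: "\<And>n. N \<le> n \<Longrightarrow> prob (B n) \<le> exp (- p * real n)"
    and "0 \<le> a" "0 \<le> b" "0 < p"
  shows "expectation Z \<le> a + b * (\<Sum>n. (real n + 1) * exp (- p * real n))"
proof -
  define S where "S \<omega> = (\<Sum>n\<in>{N..m}. (real n + 1) * indicator (B n) \<omega>)" for \<omega>
  have int_B: "integrable M (indicator (B n) :: 'a \<Rightarrow> real)" for n
    using B by (intro integrable_real_indicator) (auto simp: less_top[symmetric])
  have int_S: "integrable M S"
    unfolding S_def using int_B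
    by (intro Bochner_Integration.integrable_sum Bochner_Integration.integrable_mult_right)
  have int_G: "integrable M (\<lambda>\<omega>. a + b * S \<omega>)"
    using int_S by (intro Bochner_Integration.integrable_add Bochner_Integration.integrable_mult_right) auto
  have expectation_S: "expectation S = (\<Sum>n\<in>{N..m}. (real n + 1) * prob (B n))"
    unfolding S_def using int_B B
    by (subst Bochner_Integration.integral_sum) (auto simp: less_top[symmetric])
  have "expectation Z \<le> expectation (\<lambda>\<omega>. a + b * S \<omega>)"
  proof (cases "integrable M Z")
    case True
    then show ?thesis
      using int_G Z by (intro integral_mono) (auto simp: S_def)
  next
    case False
    have "0 \<le> expectation (\<lambda>\<omega>. a + b * S \<omega>)"
      unfolding S_def using \<open>0 \<le> a\<close> \<open>0 \<le> b\<close>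
      by (intro integral_nonneg_AE AE_I2 add_nonneg_nonneg mult_nonneg_nonneg sum_nonneg) auto
    with False show ?thesis
      by (simp add: not_integrable_integral_eq)
  qed
  also have "expectation (\<lambda>\<omega>. a + b * S \<omega>) = a + b * expectation S"
    using int_S by (simp add: Bochner_Integration.integral_add prob_space)
  also have "\<dots> = a + b * (\<Sum>n\<in>{N..m}. (real n + 1) * prob (B n))"
    using expectation_S by simp
  also have "\<dots> \<le> a + b * (\<Sum>n\<in>{N..m}. (real n + 1) * exp (- p * real n))"
    using prob_B \<open>0 \<le> b\<close> by (intro add_left_mono mult_left_mono sum_mono) auto
  also have "\<dots> \<le> a + b * (\<Sum>n. (real n + 1) * exp (- p * real n))"
    using summable_linear_times_exp[OF \<open>0 < p\<close>] \<open>0 \<le> b\<close>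
    by (intro add_left_mono mult_left_mono sum_le_suminf) auto
  finally show ?thesis .
qed

text \<open>The bound holds path by path, so \<tau> need not be a stopping time.\<close>

lemma expected_discounted_payoff_le:
  fixes X :: "real \<Rightarrow> 'o \<Rightarrow> 'e::topological_space" and r f :: "'e \<Rightarrow> real"
    and \<tau> :: "'o \<Rightarrow> ennreal"
  assumes M: "prob_space M" "sets M = sets \<Omega>"
    and X: "(\<lambda>z. X (max 0 (snd z)) (fst z)) \<in> borel_measurable (\<Omega> \<Otimes>\<^sub>M lborel)"
    and r: "r \<in> borel_measurable borel" "\<And>y. 0 \<le> r y"
    and f: "f \<in> borel_measurable borel" "\<And>y. \<bar>f y\<bar> \<le> C\<^sub>f"
    and \<mu>\<^sub>f: "\<mu>\<^sub>f < 0" and p: "0 < p"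
    and deviation: "\<And>n. N \<le> n \<Longrightarrow>
      measure M {\<omega> \<in> space \<Omega>. - \<mu>\<^sub>f / 2 < \<bar>discounted_mean r X f \<omega> (real n) - \<mu>\<^sub>f\<bar>}
        \<le> exp (- p * real n)"
  defines "C \<equiv> C\<^sub>f + \<bar>\<mu>\<^sub>f / 2\<bar>"
  shows "(\<integral>\<omega>. (LINT s:{0..enn2real (min (\<tau> \<omega>) (ennreal T))}|lborel.
      exp (- alpha r X \<omega> s) * (f (X s \<omega>) - \<mu>\<^sub>f / 2)) \<partial>M)
    \<le> C * (real N + 1) + C * (\<Sum>n. (real n + 1) * exp (- p * real n))"
proof -
  interpret prob_space M
    by (rule M(1))
  have space_M: "space M = space \<Omega>"
    using M(2) by (rule sets_eq_imp_space_eq)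
  define B where
    "B n = {\<omega> \<in> space \<Omega>. - \<mu>\<^sub>f / 2 < \<bar>discounted_mean r X f \<omega> (real n) - \<mu>\<^sub>f\<bar>}" for n :: nat
  define m where "m = nat \<lfloor>max 0 T\<rfloor>"
  have B_events: "B n \<in> events" for n
  proof -
    have "(\<lambda>\<omega>. discounted_mean r X f \<omega> (real n)) \<in> borel_measurable \<Omega>"
      using borel_measurable_discounted_mean[OF X r(1) f(1)] .
    then show ?thesis
      unfolding B_def M(2) by measurable
  qed
  have path_bound: "(LINT s:{0..enn2real (min (\<tau> \<omega>) (ennreal T))}|lborel.
      exp (- alpha r X \<omega> s) * (f (X s \<omega>) - \<mu>\<^sub>f / 2))
    \<le> C * (real N + 1) + C * (\<Sum>n\<in>{N..m}. (real n + 1) * indicator (B n) \<omega>)"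
    if \<omega>: "\<omega> \<in> space M" for \<omega>
  proof -
    define t where "t = enn2real (min (\<tau> \<omega>) (ennreal T))"
    define e where "e s = exp (- alpha r X \<omega> s)" for s
    define \<phi> where "\<phi> s = f (X (max 0 s) \<omega>)" for s
    have \<omega>': "\<omega> \<in> space \<Omega>"
      using \<omega> space_M by simp
    have e_meas: "e \<in> borel_measurable lborel"
      unfolding e_def using measurable_Pair2[OF borel_measurable_alpha[OF X r(1)] \<omega>'] by simp
    have \<phi>_meas: "\<phi> \<in> borel_measurable lborel"
      unfolding \<phi>_def using measurable_Pair2[OF measurable_compose[OF X f(1)] \<omega>'] by simp
    have alpha_nonneg: "0 \<le> alpha r X \<omega> s" for s
      unfolding alpha_def set_lebesgue_integral_def using r(2)
      by (intro integral_nonneg_AE) (simp add: indicator_def)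
    have "0 \<le> t"
      unfolding t_def by simp
    moreover have "t \<le> max 0 T"
    proof -
      have "t \<le> enn2real (ennreal T)"
        unfolding t_def by (rule enn2real_mono) auto
      then show ?thesis
        by (cases "0 \<le> T") (auto simp: ennreal_neg)
    qed
    then have "nat \<lfloor>t\<rfloor> \<le> m"
      unfolding m_def by (intro nat_mono floor_mono)
    moreover have
      "(1 / (LINT s:{0..real n}|lborel. e s)) * (LINT s:{0..real n}|lborel. e s * \<phi> s) \<le> \<mu>\<^sub>f / 2"
      if "\<omega> \<notin> B n" for n
    proof -
      have "(1 / (LINT s:{0..real n}|lborel. e s)) * (LINT s:{0..real n}|lborel. e s * \<phi> s)
          = discounted_mean r X f \<omega> (real n)"
        unfolding discounted_mean_def e_def \<phi>_def by (simp add: set_lebesgue_integral_cong)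
      with that \<omega>' show ?thesis
        unfolding B_def by auto
    qed
    ultimately have "(LINT s:{0..t}|lborel. e s * (\<phi> s - \<mu>\<^sub>f / 2))
        \<le> C * (real N + 1) + C * (\<Sum>n\<in>{N..m}. (real n + 1) * of_bool (\<omega> \<in> B n))"
    proof (intro set_integral_weighted_le_deviations[OF e_meas \<phi>_meas,
          where bad="\<lambda>n. \<omega> \<in> B n"])
      show "0 \<le> e s \<and> e s \<le> 1" for s
        using alpha_nonneg[of s] by (simp add: e_def)
      show "\<bar>\<phi> s - \<mu>\<^sub>f / 2\<bar> \<le> C" for s
        using f(2)[of "X (max 0 s) \<omega>"] abs_triangle_ineq4[of "\<phi> s" "\<mu>\<^sub>f / 2"]
        unfolding C_def \<phi>_def by linarith
    qed (use \<mu>\<^sub>f in auto)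
    moreover have "(LINT s:{0..t}|lborel. e s * (\<phi> s - \<mu>\<^sub>f / 2))
        = (LINT s:{0..t}|lborel. exp (- alpha r X \<omega> s) * (f (X s \<omega>) - \<mu>\<^sub>f / 2))"
      unfolding e_def \<phi>_def by (simp add: set_lebesgue_integral_cong)
    ultimately show ?thesis
      unfolding t_def by (simp add: indicator_def)
  qed
  have "0 \<le> C"
    unfolding C_def using f(2)[of undefined] by linarith
  then show ?thesis
    using deviation p
    by (intro expectation_le_deviation_sum[OF path_bound B_events]) (auto simp: B_def)
qed

lemma stopping_time_inf_zero:
  assumes "filtration_on \<Omega> F"
  shows "stopping_time_inf \<Omega> F (\<lambda>_. 0)"
  unfolding stopping_time_inf_def
proof (intro allI impI)
  fix t :: real
  assume "0 \<le> t"
  then have "space (F t) = space \<Omega>"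
    using assms unfolding filtration_on_def by auto
  then show "{\<omega> \<in> space \<Omega>. (0::ennreal) \<le> ennreal t} \<in> sets (F t)"
    using sets.top[of "F t"] by simp
qed

lemma gamma_r_nonneg:
  assumes "filtration_on \<Omega> F"
  shows "0 \<le> gamma_r \<Omega> F P X r f c x"
proof -
  have "(LINT s:{0..enn2real (min 0 (ennreal T))}|lborel.
      exp (- alpha r X \<omega> s) * (f (X s \<omega>) - c)) = 0" for \<omega> and T :: real
  proof -
    have "AE s in lborel.
        indicator {0::real} s *\<^sub>R (exp (- alpha r X \<omega> s) * (f (X s \<omega>) - c)) = 0"
      using AE_lborel_singleton[of "0::real"] by eventually_elim simp
    then show ?thesis
      unfolding set_lebesgue_integral_def by (simp add: integral_eq_zero_AE)
  qed
  then have "Limsup at_top (\<lambda>T::real. ereal (\<integral>\<omega>.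
      (LINT s:{0..enn2real (min ((\<lambda>_. 0) \<omega>) (ennreal T))}|lborel.
        exp (- alpha r X \<omega> s) * (f (X s \<omega>) - c)) \<partial>P x)) = 0"
    by (simp add: Limsup_const)
  moreover have "stopping_time_inf \<Omega> F (\<lambda>_. 0)"
    using assms by (rule stopping_time_inf_zero)
  ultimately show ?thesis
    unfolding gamma_r_def by (intro SUP_upper2[where i="\<lambda>_. 0"]) auto
qed

lemma gamma_r_le:
  assumes "\<And>\<tau> T. stopping_time_inf \<Omega> F \<tau> \<Longrightarrow>
    (\<integral>\<omega>. (LINT s:{0..enn2real (min (\<tau> \<omega>) (ennreal T))}|lborel.
      exp (- alpha r X \<omega> s) * (f (X s \<omega>) - c)) \<partial>P x) \<le> B"
  shows "gamma_r \<Omega> F P X r f c x \<le> ereal B"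
  unfolding gamma_r_def
  by (intro SUP_least Limsup_bounded always_eventually allI) (simp add: assms)

lemma gamma_r_bounded_on:
  fixes X :: "real \<Rightarrow> 'o \<Rightarrow> 'e::metric_space" and r f :: "'e \<Rightarrow> real"
  assumes proc: "standard_markov \<Omega> F P X"
    and r: "r \<in> borel_measurable borel" "\<And>y. 0 \<le> r y"
    and f: "f \<in> borel_measurable borel" "\<And>y. \<bar>f y\<bar> \<le> C\<^sub>f"
    and \<mu>\<^sub>f: "\<mu>\<^sub>f < 0" and p: "0 < p"
    and deviation: "\<And>n x. x \<in> K \<Longrightarrow> N \<le> n \<Longrightarrow>
      measure (P x) {\<omega> \<in> space \<Omega>. - \<mu>\<^sub>f / 2 < \<bar>discounted_mean r X f \<omega> (real n) - \<mu>\<^sub>f\<bar>}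
        \<le> exp (- p * real n)"
  shows "\<exists>B. \<forall>x\<in>K. gamma_r \<Omega> F P X r f (\<mu>\<^sub>f / 2) x \<le> ereal B"
proof -
  have laws: "prob_space (P x)" "sets (P x) = sets \<Omega>" for x
    using proc unfolding standard_markov_def by auto
  have "\<forall>x\<in>K. gamma_r \<Omega> F P X r f (\<mu>\<^sub>f / 2) x
      \<le> ereal ((C\<^sub>f + \<bar>\<mu>\<^sub>f / 2\<bar>) * (real N + 1)
        + (C\<^sub>f + \<bar>\<mu>\<^sub>f / 2\<bar>) * (\<Sum>n. (real n + 1) * exp (- p * real n)))"
    by (intro ballI gamma_r_le expected_discounted_payoff_le[OF laws
          standard_markov_measurable_paths[OF proc] r f \<mu>\<^sub>f p] deviation)
  then show ?thesis ..
qed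

lemma bounded_image_real_of_ereal_divide:
  fixes \<Gamma> :: "'a \<Rightarrow> ereal"
  assumes "\<And>x. x \<in> K \<Longrightarrow> 0 \<le> \<Gamma> x" "\<And>x. x \<in> K \<Longrightarrow> \<Gamma> x \<le> ereal B" and "d < 0"
  shows "bounded ((\<lambda>x. (real_of_ereal (\<Gamma> x) + c) / - d) ` K)"
proof (rule bounded_subset[OF bounded_closed_interval])
  show "(\<lambda>x. (real_of_ereal (\<Gamma> x) + c) / - d) ` K \<subseteq> {c / - d .. (\<bar>B\<bar> + c) / - d}"
  proof (rule image_subsetI)
    fix x
    assume "x \<in> K"
    then have "0 \<le> real_of_ereal (\<Gamma> x)" "real_of_ereal (\<Gamma> x) \<le> \<bar>B\<bar>"
      using assms(1,2)[of x] by (cases "\<Gamma> x"; simp)+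
    then show "(real_of_ereal (\<Gamma> x) + c) / - d \<in> {c / - d .. (\<bar>B\<bar> + c) / - d}"
      using \<open>d < 0\<close> by (simp add: divide_right_mono_neg)
  qed
qed

theorem lemma3p11:
  fixes \<Omega> :: "'o measure" and F :: "real \<Rightarrow> 'o measure"
    and P :: "'e::{heine_borel, second_countable_topology} \<Rightarrow> 'o measure"
    and X :: "real \<Rightarrow> 'o \<Rightarrow> 'e" and \<mu> :: "'e measure"
    and f g r :: "'e \<Rightarrow> real"
  assumes proc: "standard_markov \<Omega> F P X"
    and feller: "weak_feller P X"
    and erg: "ergodic P X \<mu>"
    and f_cont: "continuous_on UNIV f" and f_bdd: "bounded (range f)"
    and g_cont: "continuous_on UNIV g" and g_bdd: "bounded (range g)"
    and r_cont: "continuous_on UNIV r" and r_bdd: "bounded (range r)"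
    and r_nonneg: "\<forall>y. r y \<ge> 0"
    and mu_f: "integral\<^sup>L \<mu> f < 0"
    and L_r: "\<forall>\<delta> \<epsilon> K. \<delta> > 0 \<and> \<epsilon> > 0 \<and> compact K \<longrightarrow>
               (\<exists>N::nat. \<exists>p::real. N > 0 \<and> p > 0 \<and>
                 (\<forall>n::nat. \<forall>x\<in>K. n \<ge> N \<longrightarrow>
                    measure (P x) {\<omega> \<in> space (P x).
                       \<bar>(1 / (LINT s:{0..real n * \<delta>}|lborel. exp (- alpha r X \<omega> s))) *
                          (LINT s:{0..real n * \<delta>}|lborel. exp (- alpha r X \<omega> s) * f (X s \<omega>))
                        - integral\<^sup>L \<mu> f\<bar> > \<epsilon>}
                    \<le> exp (- p * real n * \<delta>)))"
  shows "\<exists>d :: 'e \<Rightarrow> real.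
           (\<forall>x. d x < 0 \<and> gamma_r \<Omega> F P X r f (d x) x < \<infinity>) \<and>
           (\<forall>K. compact K \<longrightarrow>
              bounded ((\<lambda>x. (real_of_ereal (gamma_r \<Omega> F P X r f (d x) x) + 2 * supnorm g + 1) / (- d x)) ` K))"
proof -
  have filtration: "filtration_on \<Omega> F" and sets_P: "\<And>x. sets (P x) = sets \<Omega>"
    using proc unfolding standard_markov_def by auto
  have space_P: "space (P x) = space \<Omega>" for x
    using sets_P by (rule sets_eq_imp_space_eq)
  obtain C\<^sub>f where C\<^sub>f: "\<And>y. \<bar>f y\<bar> \<le> C\<^sub>f"
    using f_bdd unfolding bounded_iff by auto
  define d where "d = integral\<^sup>L \<mu> f / 2"
  have "d < 0"
    using mu_f unfolding d_def by simp
  have bounded_on_compact: "\<exists>B. \<forall>x\<in>K. gamma_r \<Omega> F P X r f d x \<le> ereal B"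
    if "compact K" for K
  proof -
    obtain N p where "0 < p" and "\<And>n x. x \<in> K \<Longrightarrow> N \<le> n \<Longrightarrow>
      measure (P x) {\<omega> \<in> space \<Omega>.
        - integral\<^sup>L \<mu> f / 2 < \<bar>discounted_mean r X f \<omega> (real n) - integral\<^sup>L \<mu> f\<bar>}
        \<le> exp (- p * real n)"
      using L_r[rule_format, of 1 "- integral\<^sup>L \<mu> f / 2" K] \<open>compact K\<close> mu_f
      by (auto simp: discounted_mean_def space_P)
    then show ?thesis
      unfolding d_def using r_nonneg
      by (intro gamma_r_bounded_on[OF proc borel_measurable_continuous_onI[OF r_cont] _
            borel_measurable_continuous_onI[OF f_cont] C\<^sub>f mu_f]) auto
  qed
  have gamma_nonneg: "0 \<le> gamma_r \<Omega> F P X r f d x" for x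
    using filtration by (rule gamma_r_nonneg)
  show ?thesis
  proof (intro exI[of _ "\<lambda>_. d"] conjI allI impI)
    fix x
    show "d < 0" by fact
    show "gamma_r \<Omega> F P X r f d x < \<infinity>"
      using bounded_on_compact[of "{x}"] le_less_trans by fastforce
  next
    fix K :: "'e set"
    assume "compact K"
    then obtain B where "\<And>x. x \<in> K \<Longrightarrow> gamma_r \<Omega> F P X r f d x \<le> ereal B"
      using bounded_on_compact by blast
    with gamma_nonneg \<open>d < 0\<close>
    have "bounded
        ((\<lambda>x. (real_of_ereal (gamma_r \<Omega> F P X r f d x) + (2 * supnorm g + 1)) / - d) ` K)"
      by (intro bounded_image_real_of_ereal_divide)
    then show "bounded
        ((\<lambda>x. (real_of_ereal (gamma_r \<Omega> F P X r f d x) + 2 * supnorm g + 1) / - d) ` K)"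
      by (simp add: add.assoc)
  qed
qed

end
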